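(* Let $\{\rho_n\}_{n\ge0},\{\beta_n\}_{n\ge0},\{\tau_n\}_{n\ge0}$ be complex sequences with $\rho_n\ne0$, $\tau_n\neq0$ for $n\ge0$, $\beta_0\neq0,\pm1$, $\beta_n\neq0$ for $n\ge1$. Let $\mathcal{P}_0(\lambda)=1$, $\mathcal{P}_1(\lambda)=\rho_0(\lambda-\beta_0)$ and $\mathcal{P}_{n+1}(\lambda)=\rho_n(\lambda-\beta_n)\mathcal{P}_n(\lambda)+\tau_n\lambda\,\mathcal{P}_{n-1}(\lambda)$ for $n\ge1$. Let $\{\alpha_n\}_{n\ge0}$ be nonzero real numbers with $\alpha_0=\tau_0\rho_0^{-1}$, $\alpha_1\neq\rho_0\beta_0$ and $$\alpha_n=-(\rho_{n-1}-\alpha_{n-1}^{-1}\tau_{n-1})+\rho_{n-1}\beta_{n-1},\quad n\ge2,$$ and put $\mathcal{Q}_0(\lambda)=1$, $\mathcal{Q}_n(\lambda)=\mathcal{P}_n(\lambda)+\alpha_n\mathcal{P}_{n-1}(\lambda)$, $n\ge1$. With $p_n=\alpha_{n-1}\rho_{n-1}-\tau_{n-1}$ and $q_n=\alpha_{n-1}(\alpha_n-\rho_{n-1}\beta_{n-1})$, assume $p_{n+1}\neq0$ and $q_n\neq0$ for all $n\ge1$. Suppose $\mathcal{Q}_1(1)=0$. Then $\mathcal{Q}_n(\lambda)$ has a common zero at $\lambda=1$ for all $n\ge2$, with $\mathcal{Q}_2(\lambda)$ having a double zero at $\lambda=1$ if $\alpha_1\,(\neq\rho_0\beta_0)$ is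 a root of the quadratic equation $\rho_1x^2-\rho_0\beta_0\tau_1=0$. However, if $\mathcal{Q}_2(\lambda)$ does not have a double zero at $\lambda=1$, then for every $n\ge2$, $\mathcal{Q}_n(\lambda)$ and $\mathcal{Q}_{n-1}(\lambda)$ have no common zero except at $\lambda=1$.
   Context: Standing assumptions of the paper in this setting: $p_{n+1}\neq0$, $q_n\neq0$ for $n\ge1$. *)

theory Defs
  imports "HOL-Computational_Algebra.Polynomial"
begin

fun PP :: "(nat \<Rightarrow> complex) \<Rightarrow> (nat \<Rightarrow> complex) \<Rightarrow> (nat \<Rightarrow> complex) \<Rightarrow> nat \<Rightarrow> complex poly" where
  "PP \<rho> \<beta> \<tau> 0 = 1"
| "PP \<rho> \<beta> \<tau> (Suc 0) = smult (\<rho> 0) [:- \<beta> 0, 1:]"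
| "PP \<rho> \<beta> \<tau> (Suc (Suc n)) =
     smult (\<rho> (Suc n)) [:- \<beta> (Suc n), 1:] * PP \<rho> \<beta> \<tau> (Suc n)
     + smult (\<tau> (Suc n)) [:0, 1:] * PP \<rho> \<beta> \<tau> n"

definition QQ :: "(nat \<Rightarrow> complex) \<Rightarrow> (nat \<Rightarrow> complex) \<Rightarrow> (nat \<Rightarrow> complex) \<Rightarrow> (nat \<Rightarrow> real) \<Rightarrow> nat \<Rightarrow> complex poly" where
  "QQ \<rho> \<beta> \<tau> \<alpha> n = (if n = 0 then 1
     else PP \<rho> \<beta> \<tau> n + smult (complex_of_real (\<alpha> n)) (PP \<rho> \<beta> \<tau> (n - 1)))"

definition pp :: "(nat \<Rightarrow> complex) \<Rightarrow> (nat \<Rightarrow> complex) \<Rightarrow> (nat \<Rightarrow> real) \<Rightarrow> nat \<Rightarrow> complex" where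
  "pp \<rho> \<tau> \<alpha> n = complex_of_real (\<alpha> (n - 1)) * \<rho> (n - 1) - \<tau> (n - 1)"

definition qq :: "(nat \<Rightarrow> complex) \<Rightarrow> (nat \<Rightarrow> complex) \<Rightarrow> (nat \<Rightarrow> real) \<Rightarrow> nat \<Rightarrow> complex" where
  "qq \<rho> \<beta> \<alpha> n = complex_of_real (\<alpha> (n - 1)) *
     (complex_of_real (\<alpha> n) - \<rho> (n - 1) * \<beta> (n - 1))"

end

theory Submission
  imports Defs
begin

text \<open>By the recurrence for \<open>\<alpha>\<close>, \<open>Q\<^sub>n\<^sub>+\<^sub>1 = (\<rho>\<^sub>n (\<lambda> - 1) + \<tau>\<^sub>n/\<alpha>\<^sub>n) P\<^sub>n + \<tau>\<^sub>n \<lambda> P\<^sub>n\<^sub>-\<^sub>1\<close> for \<open>n \<ge> 1\<close>.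
  At \<open>\<lambda> = 1\<close> this reads \<open>Q\<^sub>n\<^sub>+\<^sub>1(1) = (\<tau>\<^sub>n/\<alpha>\<^sub>n) Q\<^sub>n(1)\<close>, so the zero at 1 propagates.
  At a common zero \<open>z\<close> of \<open>Q\<^sub>n\<^sub>+\<^sub>1\<close> and \<open>Q\<^sub>n\<close>, eliminating \<open>P\<^sub>n(z) = -\<alpha>\<^sub>n P\<^sub>n\<^sub>-\<^sub>1(z)\<close> leaves
  \<open>(z - 1) p\<^sub>n\<^sub>+\<^sub>1 P\<^sub>n\<^sub>-\<^sub>1(z) = 0\<close>; for \<open>z \<noteq> 1\<close> both \<open>P\<^sub>n\<^sub>-\<^sub>1\<close> and \<open>P\<^sub>n\<close> would vanish at \<open>z\<close>, which the
  three-term recurrence forbids since no \<open>P\<^sub>k\<close> vanishes at 0. Finally \<open>Q\<^sub>1(1) = 0\<close> fixes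
  \<open>\<alpha>\<^sub>1 = \<rho>\<^sub>0 (\<beta>\<^sub>0 - 1)\<close>, and under the quadratic condition \<open>Q\<^sub>2 = \<rho>\<^sub>0 \<rho>\<^sub>1 (\<lambda> - 1)\<^sup>2\<close>.\<close>

lemma poly_PP_Suc_Suc:
  "poly (PP \<rho> \<beta> \<tau> (Suc (Suc n))) z =
     \<rho> (Suc n) * (z - \<beta> (Suc n)) * poly (PP \<rho> \<beta> \<tau> (Suc n)) z + \<tau> (Suc n) * z * poly (PP \<rho> \<beta> \<tau> n) z"
  by (simp add: algebra_simps)

lemma poly_PP_0_nonzero:
  assumes "\<And>n. \<rho> n \<noteq> 0" and "\<And>n. \<beta> n \<noteq> 0"
  shows "poly (PP \<rho> \<beta> \<tau> n) 0 \<noteq> 0"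
  using assms by (induction \<rho> \<beta> \<tau> n rule: PP.induct) auto

lemma PP_consecutive_no_common_root:
  assumes \<rho>: "\<And>n. \<rho> n \<noteq> 0" and \<beta>: "\<And>n. \<beta> n \<noteq> 0" and \<tau>: "\<And>n. \<tau> n \<noteq> 0"
  shows "\<not> (poly (PP \<rho> \<beta> \<tau> (Suc k)) z = 0 \<and> poly (PP \<rho> \<beta> \<tau> k) z = 0)"
proof (induction k)
  case 0
  then show ?case by simp
next
  case (Suc k)
  show ?case
  proof
    assume roots: "poly (PP \<rho> \<beta> \<tau> (Suc (Suc k))) z = 0 \<and> poly (PP \<rho> \<beta> \<tau> (Suc k)) z = 0"
    then have "\<tau> (Suc k) * z * poly (PP \<rho> \<beta> \<tau> k) z = 0"
      unfolding poly_PP_Suc_Suc by auto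
    moreover have "z \<noteq> 0"
      using roots poly_PP_0_nonzero[OF \<rho> \<beta>, where n="Suc k" and \<tau>=\<tau>] by auto
    ultimately have "poly (PP \<rho> \<beta> \<tau> k) z = 0"
      using \<tau> by simp
    with roots Suc.IH show False by blast
  qed
qed

lemma poly_QQ:
  assumes "n \<ge> 1"
  shows "poly (QQ \<rho> \<beta> \<tau> \<alpha> n) z = poly (PP \<rho> \<beta> \<tau> n) z + \<alpha> n * poly (PP \<rho> \<beta> \<tau> (n - 1)) z"
  using assms by (simp add: QQ_def)

lemma poly_QQ_Suc:
  assumes "m \<ge> 1"
    and rec: "complex_of_real (\<alpha> (Suc m)) =
        - (\<rho> m - inverse (complex_of_real (\<alpha> m)) * \<tau> m) + \<rho> m * \<beta> m"
  shows "poly (QQ \<rho> \<beta> \<tau> \<alpha> (Suc m)) z =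
     (\<rho> m * (z - 1) + \<tau> m / \<alpha> m) * poly (PP \<rho> \<beta> \<tau> m) z + \<tau> m * z * poly (PP \<rho> \<beta> \<tau> (m - 1)) z"
proof -
  obtain k where k: "m = Suc k"
    using assms(1) by (cases m) auto
  have "poly (QQ \<rho> \<beta> \<tau> \<alpha> (Suc m)) z = \<rho> m * (z - \<beta> m) * poly (PP \<rho> \<beta> \<tau> m) z
     + \<tau> m * z * poly (PP \<rho> \<beta> \<tau> (m - 1)) z + \<alpha> (Suc m) * poly (PP \<rho> \<beta> \<tau> m) z"
    unfolding k QQ_def by (simp add: algebra_simps)
  also have "\<dots> = (\<rho> m * (z - 1) + \<tau> m / \<alpha> m) * poly (PP \<rho> \<beta> \<tau> m) z
     + \<tau> m * z * poly (PP \<rho> \<beta> \<tau> (m - 1)) z"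
    unfolding rec by (simp add: algebra_simps divide_inverse)
  finally show ?thesis .
qed

lemma poly_QQ_Suc_at_1:
  assumes "m \<ge> 1" and "\<alpha> m \<noteq> 0"
    and rec: "complex_of_real (\<alpha> (Suc m)) =
        - (\<rho> m - inverse (complex_of_real (\<alpha> m)) * \<tau> m) + \<rho> m * \<beta> m"
  shows "poly (QQ \<rho> \<beta> \<tau> \<alpha> (Suc m)) 1 = \<tau> m / \<alpha> m * poly (QQ \<rho> \<beta> \<tau> \<alpha> m) 1"
  using poly_QQ_Suc[where \<alpha>=\<alpha> and \<rho>=\<rho> and \<tau>=\<tau> and \<beta>=\<beta>, OF assms(1) rec, of 1] poly_QQ[OF assms(1), of \<rho> \<beta> \<tau> \<alpha> 1] assms(2)
  by (simp add: field_simps)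

lemma QQ_consecutive_common_root_eq_1:
  assumes \<rho>: "\<And>n. \<rho> n \<noteq> 0" and \<beta>: "\<And>n. \<beta> n \<noteq> 0" and \<tau>: "\<And>n. \<tau> n \<noteq> 0"
    and "m \<ge> 1" and "\<alpha> m \<noteq> 0"
    and rec: "complex_of_real (\<alpha> (Suc m)) =
        - (\<rho> m - inverse (complex_of_real (\<alpha> m)) * \<tau> m) + \<rho> m * \<beta> m"
    and p: "\<alpha> m * \<rho> m - \<tau> m \<noteq> 0"
    and roots: "poly (QQ \<rho> \<beta> \<tau> \<alpha> (Suc m)) z = 0" "poly (QQ \<rho> \<beta> \<tau> \<alpha> m) z = 0"
  shows "z = 1"
proof (rule ccontr)
  assume "z \<noteq> 1"
  have P_m: "poly (PP \<rho> \<beta> \<tau> m) z = - \<alpha> m * poly (PP \<rho> \<beta> \<tau> (m - 1)) z"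
    using poly_QQ[OF \<open>m \<ge> 1\<close>, of \<rho> \<beta> \<tau> \<alpha> z] roots(2) by (simp add: eq_neg_iff_add_eq_0)
  have "(\<rho> m * (z - 1) + \<tau> m / \<alpha> m) * poly (PP \<rho> \<beta> \<tau> m) z
      + \<tau> m * z * poly (PP \<rho> \<beta> \<tau> (m - 1)) z = 0"
    using poly_QQ_Suc[where \<alpha>=\<alpha> and \<rho>=\<rho> and \<tau>=\<tau> and \<beta>=\<beta>, OF \<open>m \<ge> 1\<close> rec, of z] roots(1) by simp
  then have "\<alpha> m * ((z - 1) * (\<alpha> m * \<rho> m - \<tau> m) * poly (PP \<rho> \<beta> \<tau> (m - 1)) z) = 0"
    unfolding P_m using \<open>\<alpha> m \<noteq> 0\<close> by (simp add: field_simps)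
  then have "(z - 1) * (\<alpha> m * \<rho> m - \<tau> m) * poly (PP \<rho> \<beta> \<tau> (m - 1)) z = 0"
    using \<open>\<alpha> m \<noteq> 0\<close> by simp
  then have "poly (PP \<rho> \<beta> \<tau> (m - 1)) z = 0"
    using \<open>z \<noteq> 1\<close> p by simp
  moreover from this have "poly (PP \<rho> \<beta> \<tau> (Suc (m - 1))) z = 0"
    using P_m \<open>m \<ge> 1\<close> by simp
  ultimately show False
    using PP_consecutive_no_common_root[of \<rho> \<beta> \<tau>, OF \<rho> \<beta> \<tau>] by blast
qed

lemma QQ_2_eq_square:
  assumes "\<alpha> 1 \<noteq> 0"
    and Q1: "poly (QQ \<rho> \<beta> \<tau> \<alpha> 1) 1 = 0"
    and rec: "complex_of_real (\<alpha> 2) =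
        - (\<rho> 1 - inverse (complex_of_real (\<alpha> 1)) * \<tau> 1) + \<rho> 1 * \<beta> 1"
    and quadratic: "\<rho> 1 * (complex_of_real (\<alpha> 1))\<^sup>2 - \<rho> 0 * \<beta> 0 * \<tau> 1 = 0"
  shows "QQ \<rho> \<beta> \<tau> \<alpha> 2 = smult (\<rho> 1 * \<rho> 0) ([:-1, 1:] ^ 2)"
proof -
  have \<alpha>1: "complex_of_real (\<alpha> 1) = \<rho> 0 * (\<beta> 0 - 1)"
    using Q1 by (simp add: QQ_def algebra_simps)
  have "\<rho> 0 * (\<beta> 0 - 1) \<noteq> 0"
    using \<open>\<alpha> 1 \<noteq> 0\<close> \<alpha>1 by auto
  have "poly (QQ \<rho> \<beta> \<tau> \<alpha> 2) x = \<rho> 1 * \<rho> 0 * (x - 1)\<^sup>2" for x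
  proof -
    have "complex_of_real (\<alpha> (Suc 1)) =
        - (\<rho> 1 - inverse (complex_of_real (\<alpha> 1)) * \<tau> 1) + \<rho> 1 * \<beta> 1"
      using rec by (simp add: numeral_2_eq_2)
    from poly_QQ_Suc[where \<alpha>=\<alpha> and \<rho>=\<rho> and \<tau>=\<tau> and \<beta>=\<beta>, OF _ this, of x]
    have "poly (QQ \<rho> \<beta> \<tau> \<alpha> 2) x = (\<rho> 1 * (x - 1) + \<tau> 1 / \<alpha> 1) * (\<rho> 0 * (x - \<beta> 0)) + \<tau> 1 * x"
      by (simp add: numeral_2_eq_2 algebra_simps)
    also have "\<dots> = \<rho> 1 * \<rho> 0 * (x - 1)\<^sup>2
        + (x - 1) * (\<rho> 0 * \<beta> 0 * \<tau> 1 - \<rho> 1 * (complex_of_real (\<alpha> 1))\<^sup>2) / \<alpha> 1"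
      using \<open>\<rho> 0 * (\<beta> 0 - 1) \<noteq> 0\<close> unfolding \<alpha>1 by (simp add: field_simps power2_eq_square)
    finally show ?thesis
      using quadratic by simp
  qed
  then show ?thesis
    by (intro poly_ext) simp
qed

theorem mainTheorem3:
  fixes \<rho> \<beta> \<tau> :: "nat \<Rightarrow> complex" and \<alpha> :: "nat \<Rightarrow> real"
  assumes rho_nz: "\<And>n. \<rho> n \<noteq> 0"
    and tau_nz: "\<And>n. \<tau> n \<noteq> 0"
    and beta0: "\<beta> 0 \<noteq> 0" "\<beta> 0 \<noteq> 1" "\<beta> 0 \<noteq> -1"
    and beta_nz: "\<And>n. n \<ge> 1 \<Longrightarrow> \<beta> n \<noteq> 0"
    and alpha_nz: "\<And>n. \<alpha> n \<noteq> 0"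
    and alpha0: "complex_of_real (\<alpha> 0) = \<tau> 0 / \<rho> 0"
    and alpha1: "complex_of_real (\<alpha> 1) \<noteq> \<rho> 0 * \<beta> 0"
    and alpha_rec: "\<And>n. n \<ge> 2 \<Longrightarrow> complex_of_real (\<alpha> n) =
        - (\<rho> (n - 1) - inverse (complex_of_real (\<alpha> (n - 1))) * \<tau> (n - 1)) + \<rho> (n - 1) * \<beta> (n - 1)"
    and p_nz: "\<And>n. n \<ge> 1 \<Longrightarrow> pp \<rho> \<tau> \<alpha> (n + 1) \<noteq> 0"
    and q_nz: "\<And>n. n \<ge> 1 \<Longrightarrow> qq \<rho> \<beta> \<alpha> n \<noteq> 0"
    and Q1: "poly (QQ \<rho> \<beta> \<tau> \<alpha> 1) 1 = 0"
  shows "(\<forall>n\<ge>2. poly (QQ \<rho> \<beta> \<tau> \<alpha> n) 1 = 0)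
    \<and> (\<rho> 1 * (complex_of_real (\<alpha> 1))\<^sup>2 - \<rho> 0 * \<beta> 0 * \<tau> 1 = 0
         \<longrightarrow> order 1 (QQ \<rho> \<beta> \<tau> \<alpha> 2) = 2)
    \<and> (order 1 (QQ \<rho> \<beta> \<tau> \<alpha> 2) \<noteq> 2
         \<longrightarrow> (\<forall>n\<ge>2. \<forall>z. poly (QQ \<rho> \<beta> \<tau> \<alpha> n) z = 0 \<and> poly (QQ \<rho> \<beta> \<tau> \<alpha> (n - 1)) z = 0
                 \<longrightarrow> z = 1))"
proof -
  have beta_nonzero: "\<beta> n \<noteq> 0" for n
    using beta0(1) beta_nz by (cases n) auto
  have rec: "complex_of_real (\<alpha> (Suc m)) =
      - (\<rho> m - inverse (complex_of_real (\<alpha> m)) * \<tau> m) + \<rho> m * \<beta> m" if "m \<ge> 1" for m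
    using alpha_rec[of "Suc m"] that by simp
  have vanish_at_1: "poly (QQ \<rho> \<beta> \<tau> \<alpha> n) 1 = 0" if "n \<ge> 1" for n
    using that
  proof (induction n rule: dec_induct)
    case (step n)
    then show ?case using poly_QQ_Suc_at_1[where \<alpha>=\<alpha> and \<rho>=\<rho> and \<tau>=\<tau> and \<beta>=\<beta>, OF _ alpha_nz rec] by simp
  qed (rule Q1)
  have double_root: "order 1 (QQ \<rho> \<beta> \<tau> \<alpha> 2) = 2"
    if "\<rho> 1 * (complex_of_real (\<alpha> 1))\<^sup>2 - \<rho> 0 * \<beta> 0 * \<tau> 1 = 0"
  proof -
    have "complex_of_real (\<alpha> 2) =
        - (\<rho> 1 - inverse (complex_of_real (\<alpha> 1)) * \<tau> 1) + \<rho> 1 * \<beta> 1"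
      using alpha_rec[of 2] by (simp add: numeral_2_eq_2)
    from QQ_2_eq_square[OF alpha_nz Q1 this that] show ?thesis
      using rho_nz[of 0] rho_nz[of 1] by (simp add: order_smult order_power_n_n)
  qed
  have common_root: "z = 1"
    if "n \<ge> 2" "poly (QQ \<rho> \<beta> \<tau> \<alpha> n) z = 0" "poly (QQ \<rho> \<beta> \<tau> \<alpha> (n - 1)) z = 0" for n z
  proof -
    obtain m where m: "n = Suc m" "m \<ge> 1"
      using \<open>n \<ge> 2\<close> by (cases n) auto
    show ?thesis
      using QQ_consecutive_common_root_eq_1[of \<rho> \<beta> \<tau>, OF rho_nz beta_nonzero tau_nz \<open>m \<ge> 1\<close> alpha_nz rec[OF \<open>m \<ge> 1\<close>]]
        p_nz[OF \<open>m \<ge> 1\<close>] that(2,3) m by (simp add: pp_def)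
  qed
  show ?thesis
    using vanish_at_1 double_root common_root by auto
qed

end
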